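(* For all (not necessarily typable) terms $M,N_1,N_2$ of $\lambda^{\triangleright}$: if $M\to^*N_1$ and $M\to^*N_2$, then there exists $N$ such that $N_1\to^*N$ and $N_2\to^*N$.
   Context: Terms of $\lambda^{\triangleright}$: transition variables $\alpha,\beta,\dots$; a transition $A,B$ is a finite sequence of transition variables ($\varepsilon$ empty, $AB$ concatenation). Types $\tau ::= b \mid \tau\to\tau \mid \triangleright_\alpha\tau \mid \forall\alpha.\tau$. Terms $M ::= x \mid M\,M \mid \lambda x{:}\tau.M \mid \blacktriangleright_\alpha M \mid \blacktriangleleft_\alpha M \mid \Lambda\alpha.M \mid M\,A$ (quotation, unquotation, transition abstraction, instantiation by a transition); $x$ is bound in $\lambda x{:}\tau.M$ and $\alpha$ in $\Lambda\alpha.M$. For $A=\alpha_1\cdots\alpha_n$: $\blacktriangleright_A M=\blacktriangleright_{\alpha_1}\cdots\blacktriangleright_{\alpha_n}M$, $\blacktriangleleft_A M=\blacktriangleleft_{\alpha_n}\cdots\blacktriangleleft_{\alpha_1}M$ (identity when $A=\varepsilon$), and similarly $\triangleright_A\tau$. $M[x:=N]$ is capture-avoiding term substitution; $M[\alpha:=B]$ is capture-avoiding substitution of a transition $B$ for $\alpha$, replacing $\alpha$ by $B$ in transitions and $\triangleright_\alpha,\blacktriangleright_\alpha,\blacktriangleleft_\alpha$ by $\triangleright_B,\blacktriangleright_B,\blacktriangleleft_B$. Reduction $M\to N$ is the least relation closed under all term constructors (reduction anywhere, including under binders and quotations) containing $(\lambda x{:}\tau.M)\,N\to M[x:=N]$,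 $\blacktriangleleft_\alpha\blacktriangleright_\alpha M\to M$, $(\Lambda\alpha.M)\,A\to M[\alpha:=A]$; $\to^*$ is its reflexive-transitive closure. *)

theory Defs
  imports Main
begin

text \<open>Syntax of the untyped-term calculus lambda-triangle, with de Bruijn indices
 for both term variables and transition variables (so terms are identified up to
 alpha-conversion and substitution is capture-avoiding by construction).\<close>

type_synonym tvar = nat
type_synonym trans = "tvar list"

datatype 'b ty =
    TBase 'b
  | TArr "'b ty" "'b ty"
  | TQ tvar "'b ty"
  | TAll "'b ty"             \<comment> \<open>forall alpha. tau (binds index 0)\<close>

datatype 'b tm =
    Var nat
  | App "'b tm" "'b tm"
  | Lam "'b ty" "'b tm"      \<comment> \<open>binds term index 0\<close>
  | Quo tvar "'b tm"
  | Unq tvar "'b tm"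
  | TLam "'b tm"             \<comment> \<open>transition abstraction (binds transition index 0)\<close>
  | TApp "'b tm" trans

definition liftv :: "nat \<Rightarrow> nat \<Rightarrow> nat" where
  "liftv k i = (if i < k then i else Suc i)"

definition substv :: "nat \<Rightarrow> trans \<Rightarrow> tvar \<Rightarrow> trans" where
  "substv k B a = (if a = k then B else if a < k then [a] else [a - 1])"

fun tqs :: "trans \<Rightarrow> 'b ty \<Rightarrow> 'b ty" where
  "tqs [] t = t"
| "tqs (a # A) t = TQ a (tqs A t)"

fun quoteT :: "trans \<Rightarrow> 'b tm \<Rightarrow> 'b tm" where
  "quoteT [] M = M"
| "quoteT (a # A) M = Quo a (quoteT A M)"

fun unquoteT :: "trans \<Rightarrow> 'b tm \<Rightarrow> 'b tm" where
  "unquoteT [] M = M"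
| "unquoteT (a # A) M = unquoteT A (Unq a M)"

primrec liftTy :: "nat \<Rightarrow> 'b ty \<Rightarrow> 'b ty" where
  "liftTy k (TBase b) = TBase b"
| "liftTy k (TArr s t) = TArr (liftTy k s) (liftTy k t)"
| "liftTy k (TQ a t) = TQ (liftv k a) (liftTy k t)"
| "liftTy k (TAll t) = TAll (liftTy (Suc k) t)"

primrec substTy :: "nat \<Rightarrow> trans \<Rightarrow> 'b ty \<Rightarrow> 'b ty" where
  "substTy k B (TBase b) = TBase b"
| "substTy k B (TArr s t) = TArr (substTy k B s) (substTy k B t)"
| "substTy k B (TQ a t) = tqs (substv k B a) (substTy k B t)"
| "substTy k B (TAll t) = TAll (substTy (Suc k) (map (liftv 0) B) t)"

primrec liftM :: "nat \<Rightarrow> 'b tm \<Rightarrow> 'b tm" where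
  "liftM k (Var i) = Var (liftv k i)"
| "liftM k (App M N) = App (liftM k M) (liftM k N)"
| "liftM k (Lam t M) = Lam t (liftM (Suc k) M)"
| "liftM k (Quo a M) = Quo a (liftM k M)"
| "liftM k (Unq a M) = Unq a (liftM k M)"
| "liftM k (TLam M) = TLam (liftM k M)"
| "liftM k (TApp M A) = TApp (liftM k M) A"

primrec liftTM :: "nat \<Rightarrow> 'b tm \<Rightarrow> 'b tm" where
  "liftTM k (Var i) = Var i"
| "liftTM k (App M N) = App (liftTM k M) (liftTM k N)"
| "liftTM k (Lam t M) = Lam (liftTy k t) (liftTM k M)"
| "liftTM k (Quo a M) = Quo (liftv k a) (liftTM k M)"
| "liftTM k (Unq a M) = Unq (liftv k a) (liftTM k M)"
| "liftTM k (TLam M) = TLam (liftTM (Suc k) M)"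
| "liftTM k (TApp M A) = TApp (liftTM k M) (map (liftv k) A)"

primrec subst :: "nat \<Rightarrow> 'b tm \<Rightarrow> 'b tm \<Rightarrow> 'b tm" where
  "subst k N (Var i) = (if i = k then N else if i < k then Var i else Var (i - 1))"
| "subst k N (App M1 M2) = App (subst k N M1) (subst k N M2)"
| "subst k N (Lam t M) = Lam t (subst (Suc k) (liftM 0 N) M)"
| "subst k N (Quo a M) = Quo a (subst k N M)"
| "subst k N (Unq a M) = Unq a (subst k N M)"
| "subst k N (TLam M) = TLam (subst k (liftTM 0 N) M)"
| "subst k N (TApp M A) = TApp (subst k N M) A"

primrec substTM :: "nat \<Rightarrow> trans \<Rightarrow> 'b tm \<Rightarrow> 'b tm" where
  "substTM k B (Var i) = Var i"
| "substTM k B (App M N) = App (substTM k B M) (substTM k B N)"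
| "substTM k B (Lam t M) = Lam (substTy k B t) (substTM k B M)"
| "substTM k B (Quo a M) = quoteT (substv k B a) (substTM k B M)"
| "substTM k B (Unq a M) = unquoteT (substv k B a) (substTM k B M)"
| "substTM k B (TLam M) = TLam (substTM (Suc k) (map (liftv 0) B) M)"
| "substTM k B (TApp M A) = TApp (substTM k B M) (concat (map (substv k B) A))"

inductive red :: "'b tm \<Rightarrow> 'b tm \<Rightarrow> bool" (infix "\<rightarrow>\<^sub>t" 50) where
  beta:   "App (Lam t M) N \<rightarrow>\<^sub>t subst 0 N M"
| quo:    "Unq a (Quo a M) \<rightarrow>\<^sub>t M"
| tbeta:  "TApp (TLam M) A \<rightarrow>\<^sub>t substTM 0 A M"
| appL:   "M \<rightarrow>\<^sub>t M' \<Longrightarrow> App M N \<rightarrow>\<^sub>t App M' N"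
| appR:   "N \<rightarrow>\<^sub>t N' \<Longrightarrow> App M N \<rightarrow>\<^sub>t App M N'"
| lam:    "M \<rightarrow>\<^sub>t M' \<Longrightarrow> Lam t M \<rightarrow>\<^sub>t Lam t M'"
| quoC:   "M \<rightarrow>\<^sub>t M' \<Longrightarrow> Quo a M \<rightarrow>\<^sub>t Quo a M'"
| unqC:   "M \<rightarrow>\<^sub>t M' \<Longrightarrow> Unq a M \<rightarrow>\<^sub>t Unq a M'"
| tlam:   "M \<rightarrow>\<^sub>t M' \<Longrightarrow> TLam M \<rightarrow>\<^sub>t TLam M'"
| tapp:   "M \<rightarrow>\<^sub>t M' \<Longrightarrow> TApp M A \<rightarrow>\<^sub>t TApp M' A"

abbreviation reds :: "'b tm \<Rightarrow> 'b tm \<Rightarrow> bool" (infix "\<rightarrow>\<^sub>t\<^sup>*" 50) where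
  "M \<rightarrow>\<^sub>t\<^sup>* N \<equiv> red\<^sup>*\<^sup>* M N"

end

theory Submission
  imports Defs "HOL-Library.Confluence"
begin

text \<open>
  A single parallel reduction does not work here: instantiating a transition
  variable turns the quote redex \<open>Unq a (Quo a M)\<close> into \<open>unquoteT B (quoteT B M)\<close>,
  which needs \<open>length B\<close> steps (or none).  We therefore follow Hindley--Rosen
  and split reduction into two parallel relations:
  \<^item> \<open>pb\<close> contracts beta- and transition-beta-redexes in parallel,
  \<^item> \<open>pq\<close> contracts quote redexes in parallel.
  Each is confluent by Takahashi's method (every parallel step can be completed
  to the full development), and they commute: a \<open>pq\<close>-step after a \<open>pb\<close>-step can
  be matched by a \<open>pb\<close>-step after finitely many \<open>pq\<close>-steps.  An abstract lemma
  then gives confluence of their union, whose reflexive-transitive closure is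
  that of reduction.
\<close>

section \<open>Abstract rewriting\<close>

lemma rtranclp_map:
  assumes "\<And>x y. R x y \<Longrightarrow> R (f x) (f y)"
  shows "R\<^sup>*\<^sup>* x y \<Longrightarrow> R\<^sup>*\<^sup>* (f x) (f y)"
  by (induct rule: rtranclp_induct) (auto intro: rtranclp.rtrancl_into_rtrancl assms)

lemma confluentp_by_development:
  assumes dev: "\<And>x y. R x y \<Longrightarrow> R y (dev x)"
  shows "confluentp R"
proof (rule strong_confluentp_imp_confluentp, rule strong_confluentpI)
  fix x y z assume "R x y" "R x z"
  then show "\<exists>u. R\<^sup>*\<^sup>* y u \<and> R\<^sup>=\<^sup>= z u" using dev by blast
qed

lemma confluentp_rtranclp_cong: "R\<^sup>*\<^sup>* = S\<^sup>*\<^sup>* \<Longrightarrow> confluentp R \<longleftrightarrow> confluentp S"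
  unfolding confluentp_def rtranclp_conversep by simp

lemma commute_rtranclp:
  assumes comm: "\<And>x y z. R x y \<Longrightarrow> S x z \<Longrightarrow> \<exists>u. S\<^sup>*\<^sup>* y u \<and> R z u"
  assumes "R\<^sup>*\<^sup>* x y" and "S\<^sup>*\<^sup>* x z"
  shows "\<exists>u. S\<^sup>*\<^sup>* y u \<and> R\<^sup>*\<^sup>* z u"
proof -
  have strip: "\<exists>u. S\<^sup>*\<^sup>* y u \<and> R z u" if "S\<^sup>*\<^sup>* x z" "R x y" for x y z
    using that
  proof (induct arbitrary: y rule: rtranclp_induct)
    case (step z z')
    then obtain u where "S\<^sup>*\<^sup>* y u" "R z u" by blast
    with step(2) comm obtain v where "S\<^sup>*\<^sup>* u v" "R z' v" by blast
    then show ?case using \<open>S\<^sup>*\<^sup>* y u\<close> by (meson rtranclp_trans)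
  qed blast
  show ?thesis using assms(2,3)
  proof (induct arbitrary: z rule: rtranclp_induct)
    case (step y y')
    then obtain u where "S\<^sup>*\<^sup>* y u" "R\<^sup>*\<^sup>* z u" by blast
    with step(2) strip obtain v where "S\<^sup>*\<^sup>* y' v" "R u v" by blast
    then show ?case using \<open>R\<^sup>*\<^sup>* z u\<close> by (meson rtranclp.rtrancl_into_rtrancl)
  qed blast
qed

text \<open>The composite \<open>R\<^sup>*\<^sup>* OO S\<^sup>*\<^sup>*\<close> has the diamond property and
  generates the same reflexive-transitive closure as the union.\<close>
lemma confluentp_sup:
  assumes R: "confluentp R" and S: "confluentp S"
    and comm: "\<And>x y z. R\<^sup>*\<^sup>* x y \<Longrightarrow> S\<^sup>*\<^sup>* x z \<Longrightarrow> \<exists>u. S\<^sup>*\<^sup>* y u \<and> R\<^sup>*\<^sup>* z u"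
  shows "confluentp (sup R S)"
proof -
  define T where "T = R\<^sup>*\<^sup>* OO S\<^sup>*\<^sup>*"
  have "\<exists>u. T y1 u \<and> T y2 u" if "T x y1" "T x y2" for x y1 y2
  proof -
    from that obtain a1 a2 where a: "R\<^sup>*\<^sup>* x a1" "S\<^sup>*\<^sup>* a1 y1" "R\<^sup>*\<^sup>* x a2" "S\<^sup>*\<^sup>* a2 y2"
      unfolding T_def by blast
    from confluentpD[OF R a(1,3)] obtain b where b: "R\<^sup>*\<^sup>* a1 b" "R\<^sup>*\<^sup>* a2 b" by blast
    from comm[OF b(1) a(2)] obtain c1 where c1: "S\<^sup>*\<^sup>* b c1" "R\<^sup>*\<^sup>* y1 c1" by blast
    from comm[OF b(2) a(4)] obtain c2 where c2: "S\<^sup>*\<^sup>* b c2" "R\<^sup>*\<^sup>* y2 c2" by blast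
    from confluentpD[OF S c1(1) c2(1)] obtain e where "S\<^sup>*\<^sup>* c1 e" "S\<^sup>*\<^sup>* c2 e" by blast
    with c1(2) c2(2) show ?thesis unfolding T_def by blast
  qed
  then have "confluentp T"
    by (intro strong_confluentp_imp_confluentp strong_confluentpI) blast
  moreover have "T\<^sup>*\<^sup>* = (sup R S)\<^sup>*\<^sup>*"
  proof (rule rtranclp_subset)
    show "sup R S \<le> T" unfolding T_def by auto
    have "R\<^sup>*\<^sup>* \<le> (sup R S)\<^sup>*\<^sup>*" "S\<^sup>*\<^sup>* \<le> (sup R S)\<^sup>*\<^sup>*" by (simp_all add: rtranclp_mono)
    then show "T \<le> (sup R S)\<^sup>*\<^sup>*" unfolding T_def by (auto intro: rtranclp_trans)
  qed
  ultimately show ?thesis using confluentp_rtranclp_cong by blast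
qed

section \<open>Algebra of de Bruijn shifting and substitution\<close>

abbreviation substTr :: "nat \<Rightarrow> trans \<Rightarrow> trans \<Rightarrow> trans" where
  "substTr k B A \<equiv> concat (map (substv k B) A)"

lemma liftv_liftv: "i \<le> k \<Longrightarrow> liftv (Suc k) (liftv i a) = liftv i (liftv k a)"
  by (simp add: liftv_def)

lemma liftv_comp: "i \<le> k \<Longrightarrow> liftv (Suc k) \<circ> liftv i = liftv i \<circ> liftv k"
  by (rule ext) (simp add: liftv_def)

lemma liftv_substv: "j \<le> k \<Longrightarrow>
    map (liftv k) (substv j A a) = substv j (map (liftv k) A) (liftv (Suc k) a)"
  by (auto simp: liftv_def substv_def)

lemma liftv_substv_lt: "i \<le> j \<Longrightarrow>
    map (liftv i) (substv j B a) = substv (Suc j) (map (liftv i) B) (liftv i a)"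
  by (auto simp: liftv_def substv_def)

lemma map_liftv_substv: "j \<le> k \<Longrightarrow>
    map (liftv k) \<circ> substv j A = substv j (map (liftv k) A) \<circ> liftv (Suc k)"
  by (rule ext) (simp add: liftv_substv)

lemma map_liftv_substv_lt: "i \<le> j \<Longrightarrow>
    map (liftv i) \<circ> substv j B = substv (Suc j) (map (liftv i) B) \<circ> liftv i"
  by (rule ext) (simp add: liftv_substv_lt)

lemma substv_liftv0_comp: "substv (Suc i) (map (liftv 0) B) \<circ> liftv 0 = map (liftv 0) \<circ> substv i B"
  by (rule ext) (simp add: liftv_substv_lt)

lemma substv_liftv [simp]: "substv k B (liftv k a) = [a]"
  by (auto simp: liftv_def substv_def)

lemma substTr_liftv_comp [simp]: "concat (map (substv k B \<circ> liftv k) A) = A"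
  by (induct A) auto

lemma substv_substv: "j \<le> i \<Longrightarrow>
    substTr i B (substv j A a) = substTr j (substTr i B A) (substv (Suc i) (map (liftv j) B) a)"
  by (auto simp: liftv_def substv_def)

lemma substTr_substTr: "j \<le> i \<Longrightarrow>
    substTr i B (substTr j A xs) = substTr j (substTr i B A) (substTr (Suc i) (map (liftv j) B) xs)"
  by (induct xs) (simp_all add: substv_substv)

text \<open>Transition substitution replaces a single quotation by an iterated one, so
  all operations have to be pushed through \<open>quoteT\<close>, \<open>unquoteT\<close> and \<open>tqs\<close>.\<close>

lemma quoteT_append [simp]: "quoteT (A @ C) M = quoteT A (quoteT C M)"
  by (induct A) auto

lemma unquoteT_append [simp]: "unquoteT (A @ C) M = unquoteT C (unquoteT A M)"
  by (induct A arbitrary: M) auto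

lemma tqs_append [simp]: "tqs (A @ C) t = tqs A (tqs C t)"
  by (induct A) auto

lemma liftTM_quoteT [simp]: "liftTM k (quoteT C M) = quoteT (map (liftv k) C) (liftTM k M)"
  by (induct C) auto

lemma liftTM_unquoteT [simp]: "liftTM k (unquoteT C M) = unquoteT (map (liftv k) C) (liftTM k M)"
  by (induct C arbitrary: M) auto

lemma liftTy_tqs [simp]: "liftTy k (tqs C t) = tqs (map (liftv k) C) (liftTy k t)"
  by (induct C) auto

lemma liftM_quoteT [simp]: "liftM k (quoteT C M) = quoteT C (liftM k M)"
  by (induct C) auto

lemma liftM_unquoteT [simp]: "liftM k (unquoteT C M) = unquoteT C (liftM k M)"
  by (induct C arbitrary: M) auto

lemma subst_quoteT [simp]: "subst k N (quoteT C M) = quoteT C (subst k N M)"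
  by (induct C) auto

lemma subst_unquoteT [simp]: "subst k N (unquoteT C M) = unquoteT C (subst k N M)"
  by (induct C arbitrary: M) auto

lemma substTM_quoteT [simp]: "substTM k B (quoteT C M) = quoteT (substTr k B C) (substTM k B M)"
  by (induct C) auto

lemma substTM_unquoteT [simp]:
  "substTM k B (unquoteT C M) = unquoteT (substTr k B C) (substTM k B M)"
  by (induct C arbitrary: M) auto

lemma substTy_tqs [simp]: "substTy k B (tqs C t) = tqs (substTr k B C) (substTy k B t)"
  by (induct C) auto

text \<open>Term and transition shifts act on disjoint index spaces and commute.\<close>
lemma liftM_liftTM: "liftM i (liftTM j M) = liftTM j (liftM i M)"
  by (induct M arbitrary: i j) auto

lemma liftM_liftM: "i \<le> k \<Longrightarrow> liftM (Suc k) (liftM i M) = liftM i (liftM k M)"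
  by (induct M arbitrary: i k) (auto simp: liftv_def)

lemma liftTy_liftTy: "i \<le> k \<Longrightarrow> liftTy (Suc k) (liftTy i t) = liftTy i (liftTy k t)"
  by (induct t arbitrary: i k) (auto simp: liftv_liftv)

lemma liftTM_liftTM: "i \<le> k \<Longrightarrow> liftTM (Suc k) (liftTM i M) = liftTM i (liftTM k M)"
  by (induct M arbitrary: i k) (auto simp: liftv_liftv liftTy_liftTy)

lemma liftM_subst: "j \<le> i \<Longrightarrow> liftM i (subst j s t) = subst j (liftM i s) (liftM (Suc i) t)"
  by (induct t arbitrary: i j s) (auto simp: liftv_def liftM_liftM liftM_liftTM)

lemma liftM_subst_lt: "i \<le> j \<Longrightarrow> liftM i (subst j s t) = subst (Suc j) (liftM i s) (liftM i t)"
  by (induct t arbitrary: i j s) (auto simp: liftv_def liftM_liftM liftM_liftTM)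

lemma subst_liftM [simp]: "subst k s (liftM k t) = t"
  by (induct t arbitrary: k s) (auto simp: liftv_def)

lemma liftTM_subst: "liftTM k (subst j s t) = subst j (liftTM k s) (liftTM k t)"
  by (induct t arbitrary: k j s) (auto simp: liftM_liftTM liftTM_liftTM)

lemma subst_subst: "i \<le> j \<Longrightarrow>
    subst i (subst j v u) (subst (Suc j) (liftM i v) t) = subst j v (subst i u t)"
proof (induct t arbitrary: i j u v)
  case (Lam x1 t)
  have "subst (Suc j) (liftM 0 v) (liftM 0 u) = liftM 0 (subst j v u)"
    by (simp add: liftM_subst_lt)
  moreover have "liftM 0 (liftM i v) = liftM (Suc i) (liftM 0 v)"
    by (simp add: liftM_liftM)
  ultimately show ?case using Lam(1)[of "Suc i" "Suc j" "liftM 0 v" "liftM 0 u"] Lam(2)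
    by simp
next
  case (TLam t)
  have "subst j (liftTM 0 v) (liftTM 0 u) = liftTM 0 (subst j v u)"
    by (simp add: liftTM_subst)
  moreover have "liftTM 0 (liftM i v) = liftM i (liftTM 0 v)"
    by (simp add: liftM_liftTM)
  ultimately show ?case using TLam(1)[of i j "liftTM 0 v" "liftTM 0 u"] TLam(2)
    by simp
qed (auto simp: liftv_def)

lemma liftM_substTM: "liftM i (substTM j A t) = substTM j A (liftM i t)"
  by (induct t arbitrary: i j A) auto

lemma liftTy_substTy: "j \<le> k \<Longrightarrow>
    liftTy k (substTy j A t) = substTy j (map (liftv k) A) (liftTy (Suc k) t)"
  by (induct t arbitrary: j k A) (auto simp: liftv_substv liftv_liftv liftv_comp)

lemma liftTM_substTM: "j \<le> k \<Longrightarrow>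
    liftTM k (substTM j A t) = substTM j (map (liftv k) A) (liftTM (Suc k) t)"
  by (induct t arbitrary: j k A)
    (auto simp: liftv_substv liftv_liftv liftTy_substTy map_concat liftv_comp map_liftv_substv)

lemma liftTy_substTy_lt: "i \<le> j \<Longrightarrow>
    liftTy i (substTy j B t) = substTy (Suc j) (map (liftv i) B) (liftTy i t)"
  by (induct t arbitrary: i j B) (auto simp: liftv_substv_lt liftv_liftv liftv_comp)

lemma liftTM_substTM_lt: "i \<le> j \<Longrightarrow>
    liftTM i (substTM j B t) = substTM (Suc j) (map (liftv i) B) (liftTM i t)"
  by (induct t arbitrary: i j B)
    (auto simp: liftv_substv_lt liftv_liftv liftTy_substTy_lt map_concat liftv_comp
      map_liftv_substv_lt)

lemma substTy_liftTy [simp]: "substTy k B (liftTy k t) = t"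
  by (induct t arbitrary: k B) auto

lemma substTM_liftTM [simp]: "substTM k B (liftTM k t) = t"
  by (induct t arbitrary: k B) auto

lemma subst_substTM: "subst k Q (substTM j A M) = substTM j A (subst k (liftTM j Q) M)"
  by (induct M arbitrary: k Q j A) (auto simp: liftM_liftTM liftTM_liftTM)

lemma substTM_subst: "substTM k B (subst j N M) = subst j (substTM k B N) (substTM k B M)"
  by (induct M arbitrary: k B j N) (auto simp: liftM_substTM liftTM_substTM_lt)

lemma substTy_substTy: "j \<le> i \<Longrightarrow>
    substTy i B (substTy j A t) = substTy j (substTr i B A) (substTy (Suc i) (map (liftv j) B) t)"
  by (induct t arbitrary: i j A B)
    (auto simp: substv_substv liftv_comp substv_liftv0_comp map_concat)

lemma substTM_substTM: "j \<le> i \<Longrightarrow>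
    substTM i B (substTM j A t) = substTM j (substTr i B A) (substTM (Suc i) (map (liftv j) B) t)"
proof (induct t arbitrary: i j A B)
  case (TApp t x)
  then show ?case using substTr_substTr[of j i B A x] by simp
qed (auto simp: substv_substv liftv_comp substv_liftv0_comp map_concat substTy_substTy)

section \<open>Parallel beta-reduction\<close>

inductive pb :: "'b tm \<Rightarrow> 'b tm \<Rightarrow> bool" where
  pb_var: "pb (Var i) (Var i)"
| pb_app: "pb M M' \<Longrightarrow> pb N N' \<Longrightarrow> pb (App M N) (App M' N')"
| pb_lam: "pb M M' \<Longrightarrow> pb (Lam t M) (Lam t M')"
| pb_quo: "pb M M' \<Longrightarrow> pb (Quo a M) (Quo a M')"
| pb_unq: "pb M M' \<Longrightarrow> pb (Unq a M) (Unq a M')"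
| pb_tlam: "pb M M' \<Longrightarrow> pb (TLam M) (TLam M')"
| pb_tapp: "pb M M' \<Longrightarrow> pb (TApp M A) (TApp M' A)"
| pb_beta: "pb M M' \<Longrightarrow> pb N N' \<Longrightarrow> pb (App (Lam t M) N) (subst 0 N' M')"
| pb_tbeta: "pb M M' \<Longrightarrow> pb (TApp (TLam M) A) (substTM 0 A M')"

inductive_cases pbE_lam: "pb (Lam t M) N"
inductive_cases pbE_quo: "pb (Quo a M) N"
inductive_cases pbE_tlam: "pb (TLam M) N"

lemma pb_refl [simp, intro]: "pb M M"
  by (induct M) (auto intro: pb.intros)

lemma pb_quoteT: "pb M M' \<Longrightarrow> pb (quoteT C M) (quoteT C M')"
  by (induct C) (auto intro: pb.intros)

lemma pb_unquoteT: "pb M M' \<Longrightarrow> pb (unquoteT C M) (unquoteT C M')"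
  by (induct C arbitrary: M M') (auto intro: pb.intros)

lemma pb_liftM: "pb M M' \<Longrightarrow> pb (liftM k M) (liftM k M')"
  by (induct arbitrary: k rule: pb.induct)
    (auto simp: liftM_subst liftM_substTM intro: pb.intros)

lemma pb_liftTM: "pb M M' \<Longrightarrow> pb (liftTM k M) (liftTM k M')"
  by (induct arbitrary: k rule: pb.induct)
    (auto simp: liftTM_subst liftTM_substTM intro: pb.intros)

lemma pb_subst: "pb M M' \<Longrightarrow> pb N N' \<Longrightarrow> pb (subst k N M) (subst k N' M')"
proof (induct arbitrary: k N N' rule: pb.induct)
  case (pb_beta M M' P P' t)
  have "pb (App (Lam t (subst (Suc k) (liftM 0 N) M)) (subst k N P))
          (subst 0 (subst k N' P') (subst (Suc k) (liftM 0 N') M'))"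
    using pb_beta by (intro pb.pb_beta) (auto intro: pb_liftM)
  then show ?case using subst_subst[of 0 k N' P' M'] by simp
qed (simp_all add: subst_substTM pb.intros pb_liftM pb_liftTM)

text \<open>Parallel beta-reduction is compatible with transition substitution:
  substitution never destroys or creates beta-redexes.\<close>
lemma pb_substTM: "pb M M' \<Longrightarrow> pb (substTM k B M) (substTM k B M')"
  by (induct arbitrary: k B rule: pb.induct)
    (auto simp: substTM_subst substTM_substTM intro: pb.intros pb_quoteT pb_unquoteT)

fun devb :: "'b tm \<Rightarrow> 'b tm" where
  "devb (Var i) = Var i"
| "devb (App (Lam t M) N) = subst 0 (devb N) (devb M)"
| "devb (App M N) = App (devb M) (devb N)"
| "devb (Lam t M) = Lam t (devb M)"
| "devb (Quo a M) = Quo a (devb M)"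
| "devb (Unq a M) = Unq a (devb M)"
| "devb (TLam M) = TLam (devb M)"
| "devb (TApp (TLam M) A) = substTM 0 A (devb M)"
| "devb (TApp M A) = TApp (devb M) A"

lemma pb_devb: "pb M N \<Longrightarrow> pb N (devb M)"
proof (induct rule: pb.induct)
  case (pb_app M M' N N')
  show ?case
  proof (cases "\<exists>t P. M = Lam t P")
    case True
    then obtain t P where M: "M = Lam t P" by blast
    with pb_app(1) obtain P' where M': "M' = Lam t P'" by (auto elim: pbE_lam)
    from pb_app(2) M M' have "pb P' (devb P)" by (auto elim: pbE_lam)
    then show ?thesis using M M' pb_app by (auto intro: pb.intros)
  next
    case False
    then have "devb (App M N) = App (devb M) (devb N)" by (cases M) auto
    then show ?thesis using pb_app by (auto intro: pb.intros)
  qed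
next
  case (pb_tapp M M' A)
  show ?case
  proof (cases "\<exists>P. M = TLam P")
    case True
    then obtain P where M: "M = TLam P" by blast
    with pb_tapp(1) obtain P' where M': "M' = TLam P'" by (auto elim: pbE_tlam)
    from pb_tapp(2) M M' have "pb P' (devb P)" by (auto elim: pbE_tlam)
    then show ?thesis using M M' pb_tapp by (auto intro: pb.intros)
  next
    case False
    then have "devb (TApp M A) = TApp (devb M) A" by (cases M) auto
    then show ?thesis using pb_tapp by (auto intro: pb.intros)
  qed
qed (auto intro: pb.intros pb_subst pb_substTM)

lemma confluentp_pb: "confluentp pb"
  using pb_devb by (rule confluentp_by_development)

section \<open>Parallel quote reduction\<close>

inductive pq :: "'b tm \<Rightarrow> 'b tm \<Rightarrow> bool" where
  pq_var: "pq (Var i) (Var i)"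
| pq_app: "pq M M' \<Longrightarrow> pq N N' \<Longrightarrow> pq (App M N) (App M' N')"
| pq_lam: "pq M M' \<Longrightarrow> pq (Lam t M) (Lam t M')"
| pq_quo: "pq M M' \<Longrightarrow> pq (Quo a M) (Quo a M')"
| pq_unq: "pq M M' \<Longrightarrow> pq (Unq a M) (Unq a M')"
| pq_tlam: "pq M M' \<Longrightarrow> pq (TLam M) (TLam M')"
| pq_tapp: "pq M M' \<Longrightarrow> pq (TApp M A) (TApp M' A)"
| pq_red: "pq M M' \<Longrightarrow> pq (Unq a (Quo a M)) M'"

inductive_cases pqE_var: "pq (Var i) N"
inductive_cases pqE_app: "pq (App M P) N"
inductive_cases pqE_lam: "pq (Lam t M) N"
inductive_cases pqE_quo: "pq (Quo a M) N"
inductive_cases pqE_unq: "pq (Unq a M) N"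
inductive_cases pqE_tlam: "pq (TLam M) N"
inductive_cases pqE_tapp: "pq (TApp M A) N"

lemma pq_refl [simp, intro]: "pq M M"
  by (induct M) (auto intro: pq.intros)

lemma pq_liftM: "pq M M' \<Longrightarrow> pq (liftM k M) (liftM k M')"
  by (induct arbitrary: k rule: pq.induct) (auto intro: pq.intros)

lemma pq_liftTM: "pq M M' \<Longrightarrow> pq (liftTM k M) (liftTM k M')"
  by (induct arbitrary: k rule: pq.induct) (auto intro: pq.intros)

lemma pq_subst: "pq M M' \<Longrightarrow> pq N N' \<Longrightarrow> pq (subst k N M) (subst k N' M')"
  by (induct arbitrary: k N N' rule: pq.induct) (simp_all add: pq.intros pq_liftM pq_liftTM)

fun devq :: "'b tm \<Rightarrow> 'b tm" where
  "devq (Var i) = Var i"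
| "devq (App M N) = App (devq M) (devq N)"
| "devq (Lam t M) = Lam t (devq M)"
| "devq (Quo a M) = Quo a (devq M)"
| "devq (Unq a (Quo b M)) = (if a = b then devq M else Unq a (Quo b (devq M)))"
| "devq (Unq a M) = Unq a (devq M)"
| "devq (TLam M) = TLam (devq M)"
| "devq (TApp M A) = TApp (devq M) A"

lemma pq_devq: "pq M N \<Longrightarrow> pq N (devq M)"
proof (induct rule: pq.induct)
  case (pq_unq M M' a)
  show ?case
  proof (cases "\<exists>b P. M = Quo b P")
    case True
    then obtain b P where M: "M = Quo b P" by blast
    with pq_unq(1) obtain P' where M': "M' = Quo b P'" by (auto elim: pqE_quo)
    from pq_unq(2) M M' have "pq P' (devq P)" by (auto elim: pqE_quo)
    then show ?thesis using M M' by (auto intro: pq.intros)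
  next
    case False
    then have "devq (Unq a M) = Unq a (devq M)" by (cases M) auto
    then show ?thesis using pq_unq by (auto intro: pq.intros)
  qed
qed (auto intro: pq.intros)

lemma confluentp_pq: "confluentp pq"
  using pq_devq by (rule confluentp_by_development)

lemma pqs_app: "pq\<^sup>*\<^sup>* M M' \<Longrightarrow> pq\<^sup>*\<^sup>* N N' \<Longrightarrow> pq\<^sup>*\<^sup>* (App M N) (App M' N')"
  using rtranclp_map[of pq "\<lambda>x. App x N" M M'] rtranclp_map[of pq "App M'" N N']
  by (auto intro: pq.intros rtranclp_trans)

lemma pqs_lam: "pq\<^sup>*\<^sup>* M M' \<Longrightarrow> pq\<^sup>*\<^sup>* (Lam t M) (Lam t M')"
  by (rule rtranclp_map) (rule pq.pq_lam)

lemma pqs_quo: "pq\<^sup>*\<^sup>* M M' \<Longrightarrow> pq\<^sup>*\<^sup>* (Quo a M) (Quo a M')"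
  by (rule rtranclp_map) (rule pq.pq_quo)

lemma pqs_unq: "pq\<^sup>*\<^sup>* M M' \<Longrightarrow> pq\<^sup>*\<^sup>* (Unq a M) (Unq a M')"
  by (rule rtranclp_map) (rule pq.pq_unq)

lemma pqs_tlam: "pq\<^sup>*\<^sup>* M M' \<Longrightarrow> pq\<^sup>*\<^sup>* (TLam M) (TLam M')"
  by (rule rtranclp_map) (rule pq.pq_tlam)

lemma pqs_tapp: "pq\<^sup>*\<^sup>* M M' \<Longrightarrow> pq\<^sup>*\<^sup>* (TApp M A) (TApp M' A)"
  by (rule rtranclp_map) (rule pq.pq_tapp)

lemma pqs_quoteT: "pq\<^sup>*\<^sup>* M M' \<Longrightarrow> pq\<^sup>*\<^sup>* (quoteT C M) (quoteT C M')"
  by (induct C) (auto intro: pqs_quo)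

lemma pqs_unquoteT: "pq\<^sup>*\<^sup>* M M' \<Longrightarrow> pq\<^sup>*\<^sup>* (unquoteT C M) (unquoteT C M')"
  by (induct C arbitrary: M M') (auto intro: pqs_unq)

lemma pqs_subst: "pq\<^sup>*\<^sup>* M M' \<Longrightarrow> pq\<^sup>*\<^sup>* N N' \<Longrightarrow> pq\<^sup>*\<^sup>* (subst k N M) (subst k N' M')"
  using rtranclp_map[of pq "subst k N" M M'] rtranclp_map[of pq "\<lambda>x. subst k x M'" N N']
  by (auto intro: pq_subst rtranclp_trans)

lemma pqs_unquoteT_quoteT: "pq\<^sup>*\<^sup>* (unquoteT C (quoteT C X)) X"
proof (induct C arbitrary: X)
  case (Cons c C)
  have "pq\<^sup>*\<^sup>* (unquoteT C (Unq c (Quo c (quoteT C X)))) (unquoteT C (quoteT C X))"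
    by (rule pqs_unquoteT) (auto intro: pq.intros)
  with Cons[of X] show ?case by (simp add: rtranclp_trans[of pq _ "unquoteT C (quoteT C X)"])
qed simp

text \<open>Transition substitution maps a parallel quote step to a sequence of them;
  this is why quote reduction has to be treated with multi-step relations.\<close>
lemma pq_substTM: "pq M M' \<Longrightarrow> pq\<^sup>*\<^sup>* (substTM k B M) (substTM k B M')"
proof (induct arbitrary: k B rule: pq.induct)
  case (pq_red M M' a)
  have "pq\<^sup>*\<^sup>* (substTM k B (Unq a (Quo a M))) (substTM k B M)"
    using pqs_unquoteT_quoteT by simp
  with pq_red(2)[of k B] show ?case by (blast intro: rtranclp_trans)
qed (auto intro: pqs_app pqs_lam pqs_quoteT pqs_unquoteT pqs_tlam pqs_tapp)

lemma pqs_substTM: "pq\<^sup>*\<^sup>* M M' \<Longrightarrow> pq\<^sup>*\<^sup>* (substTM k B M) (substTM k B M')"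
  by (induct rule: rtranclp_induct) (auto intro: rtranclp_trans pq_substTM)

lemma pqs_quoE: "pq\<^sup>*\<^sup>* (Quo a X) Y \<Longrightarrow> \<exists>Z. Y = Quo a Z \<and> pq\<^sup>*\<^sup>* X Z"
  by (induct rule: rtranclp_induct) (auto elim: pqE_quo intro: rtranclp.rtrancl_into_rtrancl)

section \<open>Commutation of beta and quote reduction\<close>

text \<open>A parallel beta-step and a parallel quote-step from the same term can be
  joined by a parallel beta-step after the quote-step and finitely many quote-steps
  after the beta-step (a beta-step may substitute a quote redex into several places).\<close>
lemma pb_pq_commute: "pb M N \<Longrightarrow> pq M P \<Longrightarrow> \<exists>Q. pq\<^sup>*\<^sup>* N Q \<and> pb P Q"
proof (induct arbitrary: P rule: pb.induct)
  case (pb_var i)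
  then show ?case by (auto elim: pqE_var)
next
  case (pb_app M M' N N')
  then show ?case by (blast elim: pqE_app intro: pb.intros pqs_app)
next
  case (pb_lam M M' t)
  then show ?case by (blast elim: pqE_lam intro: pb.intros pqs_lam)
next
  case (pb_quo M M' a)
  then show ?case by (blast elim: pqE_quo intro: pb.intros pqs_quo)
next
  case (pb_tlam M M')
  then show ?case by (blast elim: pqE_tlam intro: pb.intros pqs_tlam)
next
  case (pb_tapp M M' A)
  then show ?case by (blast elim: pqE_tapp intro: pb.intros pqs_tapp)
next
  case (pb_unq X X' a)
  from pb_unq(3) consider (cong) X1 where "P = Unq a X1" "pq X X1"
    | (redex) Y where "X = Quo a Y" "pq Y P"
    by (auto elim: pqE_unq)
  then show ?case
  proof cases
    case cong
    then show ?thesis using pb_unq by (blast intro: pb.intros pqs_unq)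
  next
    case redex
    text \<open>The quote step contracts \<open>Unq a (Quo a Y)\<close>; the beta step stays inside \<open>Y\<close>.\<close>
    from pb_unq(1) redex obtain Y' where X': "X' = Quo a Y'" by (auto elim: pbE_quo)
    from pb_unq(2)[of "Quo a P"] redex obtain Q where "pb (Quo a P) Q" "pq\<^sup>*\<^sup>* X' Q"
      by (auto intro: pq.intros)
    then obtain R where R: "Q = Quo a R" "pb P R" "pq\<^sup>*\<^sup>* (Quo a Y') (Quo a R)"
      using X' by (auto elim: pbE_quo)
    from R(3) have "pq\<^sup>*\<^sup>* Y' R" by (auto dest: pqs_quoE)
    moreover have "pq (Unq a (Quo a Y')) Y'" by (auto intro: pq.intros)
    ultimately have "pq\<^sup>*\<^sup>* (Unq a X') R" using X' by (simp add: converse_rtranclp_into_rtranclp)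
    then show ?thesis using R by blast
  qed
next
  case (pb_beta M M' N N' t)
  from pb_beta(5) obtain M1 N1 where P: "P = App (Lam t M1) N1" "pq M M1" "pq N N1"
    by (blast elim: pqE_app pqE_lam)
  with pb_beta obtain M'' N'' where "pb M1 M''" "pq\<^sup>*\<^sup>* M' M''" "pb N1 N''" "pq\<^sup>*\<^sup>* N' N''"
    by meson
  then show ?case using P by (blast intro: pb.intros pqs_subst)
next
  case (pb_tbeta M M' A)
  from pb_tbeta(3) obtain M1 where P: "P = TApp (TLam M1) A" "pq M M1"
    by (blast elim: pqE_tapp pqE_tlam)
  with pb_tbeta obtain M'' where "pb M1 M''" "pq\<^sup>*\<^sup>* M' M''" by meson
  then show ?case using P by (blast intro: pb.intros pqs_substTM)
qed

section \<open>Reduction lies between one step and the closure of the union\<close>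

lemma reds_app: "M \<rightarrow>\<^sub>t\<^sup>* M' \<Longrightarrow> N \<rightarrow>\<^sub>t\<^sup>* N' \<Longrightarrow> App M N \<rightarrow>\<^sub>t\<^sup>* App M' N'"
  using rtranclp_map[of red "\<lambda>x. App x N" M M'] rtranclp_map[of red "App M'" N N']
  by (auto intro: red.intros rtranclp_trans)

lemma reds_lam: "M \<rightarrow>\<^sub>t\<^sup>* M' \<Longrightarrow> Lam t M \<rightarrow>\<^sub>t\<^sup>* Lam t M'"
  by (rule rtranclp_map) (rule red.lam)

lemma reds_quo: "M \<rightarrow>\<^sub>t\<^sup>* M' \<Longrightarrow> Quo a M \<rightarrow>\<^sub>t\<^sup>* Quo a M'"
  by (rule rtranclp_map) (rule red.quoC)

lemma reds_unq: "M \<rightarrow>\<^sub>t\<^sup>* M' \<Longrightarrow> Unq a M \<rightarrow>\<^sub>t\<^sup>* Unq a M'"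
  by (rule rtranclp_map) (rule red.unqC)

lemma reds_tlam: "M \<rightarrow>\<^sub>t\<^sup>* M' \<Longrightarrow> TLam M \<rightarrow>\<^sub>t\<^sup>* TLam M'"
  by (rule rtranclp_map) (rule red.tlam)

lemma reds_tapp: "M \<rightarrow>\<^sub>t\<^sup>* M' \<Longrightarrow> TApp M A \<rightarrow>\<^sub>t\<^sup>* TApp M' A"
  by (rule rtranclp_map) (rule red.tapp)

lemma pb_reds: "pb M N \<Longrightarrow> M \<rightarrow>\<^sub>t\<^sup>* N"
proof (induct rule: pb.induct)
  case (pb_beta M M' N N' t)
  then have "App (Lam t M) N \<rightarrow>\<^sub>t\<^sup>* App (Lam t M') N'" by (auto intro: reds_app reds_lam)
  then show ?case by (auto intro: rtranclp.rtrancl_into_rtrancl red.beta)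
next
  case (pb_tbeta M M' A)
  then have "TApp (TLam M) A \<rightarrow>\<^sub>t\<^sup>* TApp (TLam M') A" by (auto intro: reds_tapp reds_tlam)
  then show ?case by (auto intro: rtranclp.rtrancl_into_rtrancl red.tbeta)
qed (auto intro: reds_app reds_lam reds_quo reds_unq reds_tlam reds_tapp)

lemma pq_reds: "pq M N \<Longrightarrow> M \<rightarrow>\<^sub>t\<^sup>* N"
proof (induct rule: pq.induct)
  case (pq_red M M' a)
  show ?case by (rule converse_rtranclp_into_rtranclp[OF red.quo pq_red(2)])
qed (auto intro: reds_app reds_lam reds_quo reds_unq reds_tlam reds_tapp)

lemma red_pb_or_pq: "M \<rightarrow>\<^sub>t N \<Longrightarrow> pb M N \<or> pq M N"
  by (induct rule: red.induct) (auto intro: pq.intros pb.intros)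

lemma rtranclp_red_eq: "(sup pb pq)\<^sup>*\<^sup>* = red\<^sup>*\<^sup>*"
proof (rule rtranclp_subset)
  show "red \<le> sup pb pq" using red_pb_or_pq by blast
  show "sup pb pq \<le> red\<^sup>*\<^sup>*" using pb_reds pq_reds by blast
qed

theorem mainTheorem7:
  fixes M N1 N2 :: "'b tm"
  assumes "M \<rightarrow>\<^sub>t\<^sup>* N1" and "M \<rightarrow>\<^sub>t\<^sup>* N2"
  shows "\<exists>N. N1 \<rightarrow>\<^sub>t\<^sup>* N \<and> N2 \<rightarrow>\<^sub>t\<^sup>* N"
proof -
  have "confluentp (sup pb pq :: 'b tm \<Rightarrow> 'b tm \<Rightarrow> bool)"
    using confluentp_pb confluentp_pq commute_rtranclp[OF pb_pq_commute]
    by (rule confluentp_sup)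
  then have "confluentp (red :: 'b tm \<Rightarrow> 'b tm \<Rightarrow> bool)"
    using rtranclp_red_eq confluentp_rtranclp_cong by blast
  then show ?thesis using assms by (rule confluentpD)
qed

end
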